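(* Let $\nu>-1$ be real and let $j_1^\nu$ be the smallest positive zero of $J_\nu(\cdot;q^2)$. Then $j_1^\nu<q^{-1}\sqrt{1+q^{2\nu}}$.
   Context: Fix $0<q<1$. For $a\in\mathbb C$ put $(a;q)_0=1$, $(a;q)_k=\prod_{i=0}^{k-1}(1-aq^i)$, $(a;q)_\infty=\prod_{i\ge0}(1-aq^i)$. For $\nu\in\mathbb C$ and $x\in\mathbb C\setminus\{0\}$ the Hahn–Exton $q$-Bessel function is $$J_\nu(x;q^2)=\frac{x^\nu}{(q^2;q^2)_\infty}\sum_{k=0}^\infty\frac{(-1)^kq^{k(k+1)}(q^{2\nu+2k+2};q^2)_\infty}{(q^2;q^2)_k}\,x^{2k},$$ with $x^\nu=\exp(\nu\operatorname{Log}x)$ (principal branch). For $\nu>-1$ this function has infinitely many positive zeros. *)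

theory Defs
  imports "HOL-Analysis.Analysis"
begin

definition qpoch :: "complex \<Rightarrow> real \<Rightarrow> nat \<Rightarrow> complex" where
  "qpoch a Q k = (\<Prod>i<k. 1 - a * of_real (Q ^ i))"

definition qpoch_inf :: "complex \<Rightarrow> real \<Rightarrow> complex" where
  "qpoch_inf a Q = (\<Prod>i. 1 - a * of_real (Q ^ i))"

text \<open>Hahn--Exton q-Bessel function J_nu(x; q^2), principal branch x^nu = exp(nu Log x).\<close>
definition HE_J :: "real \<Rightarrow> complex \<Rightarrow> complex \<Rightarrow> complex" where
  "HE_J q \<nu> x =
     exp (\<nu> * Ln x) / qpoch_inf (of_real (q^2)) (q^2) *
     (\<Sum>k. (-1)^k * of_real (q ^ (k * (k + 1))) *
            qpoch_inf (exp ((2 * \<nu> + 2 * of_nat k + 2) * of_real (ln q))) (q^2)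
            / qpoch (of_real (q^2)) (q^2) k * x ^ (2 * k))"

end

theory Submission
  imports Defs
begin

text \<open>
  Write \<open>J\<^sub>\<nu>(x;q\<^sup>2) = x\<^sup>\<nu> G(x\<^sup>2) / (q\<^sup>2;q\<^sup>2)\<^sub>\<infinity>\<close> with an entire power series \<open>G\<close>, and
  put \<open>Q = q\<^sup>2\<close>, \<open>a = q\<^sup>2\<^sup>\<nu>\<close>. The coefficients of \<open>G\<close> satisfy a two-term recurrence, which
  turns into the \<open>q\<close>-difference equation
  \<open>G(y) + (Q y - 1 - a) G(Q y) + a G(Q\<^sup>2 y) = 0\<close>.
  At \<open>y\<^sub>0 = (1 + a)/Q\<close> the middle term vanishes, so \<open>G(y\<^sub>0) = -a G(Q\<^sup>2 y\<^sub>0)\<close>.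
  Since \<open>G(0) > 0\<close>, \<open>G\<close> is positive before its first positive zero \<open>Y = (j\<^sub>1\<^sup>\<nu>)\<^sup>2\<close>;
  if \<open>y\<^sub>0 \<le> Y\<close>, then \<open>G(Q\<^sup>2 y\<^sub>0) > 0\<close> forces \<open>G(y\<^sub>0) < 0\<close>, contradicting \<open>G(y\<^sub>0) \<ge> 0\<close>.
\<close>

definition rqpoch :: "real \<Rightarrow> real \<Rightarrow> nat \<Rightarrow> real" where
  "rqpoch c Q k = (\<Prod>i<k. 1 - c * Q ^ i)"

definition rqpoch_inf :: "real \<Rightarrow> real \<Rightarrow> real" where
  "rqpoch_inf c Q = (\<Prod>i. 1 - c * Q ^ i)"

lemma qpoch_of_real: "qpoch (of_real c) Q k = of_real (rqpoch c Q k)"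
  by (simp add: qpoch_def rqpoch_def)

lemma geometric_factor_pos:
  fixes c Q :: real
  assumes "0 \<le> c" "c < 1" "0 \<le> Q" "Q \<le> 1"
  shows "0 < 1 - c * Q ^ i"
proof -
  have "c * Q ^ i \<le> c"
    using assms by (simp add: mult_left_le power_le_one)
  then show ?thesis
    using assms by simp
qed

lemma rqpoch_pos:
  assumes "0 \<le> c" "c < 1" "0 \<le> Q" "Q \<le> 1"
  shows "0 < rqpoch c Q k"
  unfolding rqpoch_def using geometric_factor_pos[OF assms] by (simp add: prod_pos)

lemma rqpoch_Suc: "rqpoch c Q (Suc k) = rqpoch c Q k * (1 - c * Q ^ k)"
  by (simp add: rqpoch_def)

lemma has_prod_rqpoch_inf:
  assumes "0 \<le> c" "c < 1" "0 \<le> Q" "Q < 1"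
  shows "(\<lambda>i. 1 - c * Q ^ i) has_prod rqpoch_inf c Q"
proof -
  have "summable (\<lambda>i. \<bar>- (c * Q ^ i)\<bar>)"
    using assms by (simp add: abs_mult summable_geometric)
  moreover have "- (c * Q ^ i) \<noteq> -1" for i
    using geometric_factor_pos[of c Q i] assms by simp
  ultimately have "convergent_prod (\<lambda>i. 1 + - (c * Q ^ i))"
    by (rule summable_imp_convergent_prod_real)
  then show ?thesis
    unfolding rqpoch_inf_def by (simp add: convergent_prod_has_prod)
qed

lemma rqpoch_inf_pos:
  assumes "0 \<le> c" "c < 1" "0 \<le> Q" "Q < 1"
  shows "0 < rqpoch_inf c Q"
  using has_prod_pos[OF has_prod_rqpoch_inf[OF assms]] geometric_factor_pos assms by simp

lemma rqpoch_inf_split_head: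
  assumes "0 \<le> c" "c < 1" "0 \<le> Q" "Q < 1"
  shows "rqpoch_inf c Q = (1 - c) * rqpoch_inf (c * Q) Q"
proof -
  have "convergent_prod (\<lambda>i. 1 - c * Q ^ i)"
    using has_prod_rqpoch_inf[OF assms] has_prod_iff by blast
  then have "(\<Prod>i. 1 - c * Q ^ Suc i) = rqpoch_inf c Q / (1 - c * Q ^ 0)"
    unfolding rqpoch_inf_def by (rule prodinf_split_head) (use assms in simp)
  then show ?thesis
    using assms by (simp add: rqpoch_inf_def mult.assoc field_simps)
qed

lemma qpoch_inf_of_real:
  assumes "0 \<le> c" "c < 1" "0 \<le> Q" "Q < 1"
  shows "qpoch_inf (of_real c) Q = of_real (rqpoch_inf c Q)"
proof -
  have "(\<lambda>i. complex_of_real (1 - c * Q ^ i)) has_prod of_real (rqpoch_inf c Q)"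
    using has_prod_rqpoch_inf[OF assms] by (subst has_prod_of_real_iff)
  then have "(\<lambda>i. 1 - of_real c * of_real (Q ^ i)) has_prod complex_of_real (rqpoch_inf c Q)"
    by (simp only: of_real_diff of_real_mult of_real_1)
  then show ?thesis
    unfolding qpoch_inf_def by (rule has_prod_unique[symmetric])
qed

lemma summable_powser_geometric_ratio:
  fixes f :: "nat \<Rightarrow> 'a :: {real_normed_field, banach}"
  assumes "0 \<le> C" "0 < Q" "Q < 1"
    and ratio: "\<And>n. norm (f (Suc n)) \<le> C * Q ^ n * norm (f n)"
  shows "summable (\<lambda>n. f n * z ^ n)"
proof -
  define D where "D = 2 * (C + 1) * (norm z + 1)"
  have D: "0 < D"
    unfolding D_def using assms by (intro mult_pos_pos) (auto intro: add_nonneg_pos)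
  then obtain N where "Q ^ N < 1 / D"
    using real_arch_pow_inv assms by (metis zero_less_divide_1_iff)
  then have N: "D * Q ^ N < 1"
    using D by (simp add: pos_less_divide_eq mult.commute)
  show ?thesis
  proof (rule summable_ratio_test[of "1/2" N])
    fix n assume "N \<le> n"
    then have "Q ^ n \<le> Q ^ N"
      using assms by (simp add: power_decreasing)
    then have "C * Q ^ n * norm z \<le> (C + 1) * Q ^ N * (norm z + 1)"
      using assms by (intro mult_mono) auto
    also have "\<dots> = D * Q ^ N / 2"
      by (simp add: D_def algebra_simps)
    also have "\<dots> \<le> 1/2"
      using N by simp
    finally have small: "C * Q ^ n * norm z \<le> 1/2" .
    have "norm (f (Suc n) * z ^ Suc n) \<le> C * Q ^ n * norm (f n) * norm z * norm z ^ n"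
      using mult_right_mono[OF ratio[of n], of "norm z * norm z ^ n"]
      by (simp add: norm_mult norm_power mult.assoc)
    also have "\<dots> = (C * Q ^ n * norm z) * (norm (f n) * norm z ^ n)"
      by (simp add: algebra_simps)
    also have "\<dots> \<le> 1/2 * norm (f n * z ^ n)"
      using mult_right_mono[OF small, of "norm (f n) * norm z ^ n"]
      by (simp add: norm_mult norm_power)
    finally show "norm (f (Suc n) * z ^ Suc n) \<le> 1/2 * norm (f n * z ^ n)" .
  qed simp
qed

text \<open>The parameter \<open>a\<close> stands for \<open>q\<^sup>2\<^sup>\<nu>\<close>, so that \<open>q\<^sup>2\<^sup>\<nu>\<^sup>+\<^sup>2\<^sup>k\<^sup>+\<^sup>2 = a (q\<^sup>2)\<^sup>k\<^sup>+\<^sup>1\<close>.\<close>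

definition he_coeff :: "real \<Rightarrow> real \<Rightarrow> nat \<Rightarrow> real" where
  "he_coeff q a k =
     (-1) ^ k * q ^ (k * (k + 1)) * rqpoch_inf (a * (q\<^sup>2) ^ Suc k) (q\<^sup>2) / rqpoch (q\<^sup>2) (q\<^sup>2) k"

definition he_series :: "real \<Rightarrow> real \<Rightarrow> real \<Rightarrow> real" where
  "he_series q a y = (\<Sum>k. he_coeff q a k * y ^ k)"

context
  fixes q a :: real
  assumes q: "0 < q" "q < 1"
    and a: "0 \<le> a" "a * q\<^sup>2 < 1"
begin

private lemma q_square: "0 < q\<^sup>2" "q\<^sup>2 < 1"
  using q by (auto simp: power_less_one_iff)

private lemma q_square_power_Suc_le: "(q\<^sup>2) ^ Suc k \<le> q\<^sup>2"
  using q_square by (simp add: mult_left_le power_le_one)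

private lemma q_square_power_Suc_less: "(q\<^sup>2) ^ Suc k < 1"
  using q_square_power_Suc_le q_square(2) by (rule le_less_trans)

private lemma a_q_square_power: "0 \<le> a * (q\<^sup>2) ^ Suc k" "a * (q\<^sup>2) ^ Suc k < 1"
proof -
  show "0 \<le> a * (q\<^sup>2) ^ Suc k"
    using a by simp
  have "a * (q\<^sup>2) ^ Suc k \<le> a * q\<^sup>2"
    using mult_left_mono[OF q_square_power_Suc_le a(1)] .
  then show "a * (q\<^sup>2) ^ Suc k < 1"
    using a by linarith
qed

lemma he_coeff_Suc:
  "he_coeff q a (Suc k) * ((1 - a * (q\<^sup>2) ^ Suc k) * (1 - (q\<^sup>2) ^ Suc k))
     = - ((q\<^sup>2) ^ Suc k * he_coeff q a k)"
proof -
  have inf: "rqpoch_inf (a * (q\<^sup>2) ^ Suc k) (q\<^sup>2)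
      = (1 - a * (q\<^sup>2) ^ Suc k) * rqpoch_inf (a * (q\<^sup>2) ^ Suc (Suc k)) (q\<^sup>2)"
    using rqpoch_inf_split_head[OF a_q_square_power less_imp_le[OF q_square(1)] q_square(2)]
    by (metis mult.assoc power_Suc2)
  have fin: "rqpoch (q\<^sup>2) (q\<^sup>2) (Suc k) = rqpoch (q\<^sup>2) (q\<^sup>2) k * (1 - (q\<^sup>2) ^ Suc k)"
    by (simp add: rqpoch_Suc)
  have "Suc k * (Suc k + 1) = k * (k + 1) + 2 * Suc k"
    by simp
  then have pow: "q ^ (Suc k * (Suc k + 1)) = q ^ (k * (k + 1)) * (q\<^sup>2) ^ Suc k"
    by (simp only: power_add power_mult)
  have "(q\<^sup>2) ^ Suc k < 1"
    by (rule q_square_power_Suc_less)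
  moreover have "rqpoch (q\<^sup>2) (q\<^sup>2) k \<noteq> 0"
    using rqpoch_pos[of "q\<^sup>2" "q\<^sup>2" k] q_square by simp
  ultimately show ?thesis
    unfolding he_coeff_def inf fin pow by (simp add: field_simps)
qed

lemma qpoch_inf_of_real_shifted:
  "qpoch_inf (of_real (a * (q\<^sup>2) ^ Suc k)) (q\<^sup>2) = of_real (rqpoch_inf (a * (q\<^sup>2) ^ Suc k) (q\<^sup>2))"
  using qpoch_inf_of_real[OF a_q_square_power] q_square by simp

lemma summable_he_coeff: "summable (\<lambda>k. he_coeff q a k * y ^ k)"
proof (rule summable_powser_geometric_ratio)
  define c where "c = (1 - a * q\<^sup>2) * (1 - q\<^sup>2)"
  have c: "0 < c"
    unfolding c_def using a q_square by simp
  show "0 \<le> q\<^sup>2 / c" "0 < q\<^sup>2" "q\<^sup>2 < 1"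
    using c q_square by auto
  fix k
  have "c \<le> (1 - a * (q\<^sup>2) ^ Suc k) * (1 - (q\<^sup>2) ^ Suc k)"
    unfolding c_def using a a_q_square_power[of k] q_square q_square_power_Suc_le[of k]
    by (intro mult_mono) (auto intro: mult_left_mono)
  then have "norm (he_coeff q a (Suc k)) * c
      \<le> norm (he_coeff q a (Suc k)) * ((1 - a * (q\<^sup>2) ^ Suc k) * (1 - (q\<^sup>2) ^ Suc k))"
    by (rule mult_left_mono) simp
  also have "\<dots> = norm (he_coeff q a (Suc k) * ((1 - a * (q\<^sup>2) ^ Suc k) * (1 - (q\<^sup>2) ^ Suc k)))"
    using a_q_square_power(2)[of k] q_square_power_Suc_less[of k] by (simp add: abs_mult)
  also have "\<dots> = (q\<^sup>2) ^ Suc k * norm (he_coeff q a k)"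
    unfolding he_coeff_Suc by (simp add: abs_mult)
  finally show "norm (he_coeff q a (Suc k)) \<le> q\<^sup>2 / c * (q\<^sup>2) ^ k * norm (he_coeff q a k)"
    using c by (simp add: field_simps)
qed

lemma he_series_q_difference:
  "he_series q a y + (q\<^sup>2 * y - 1 - a) * he_series q a (q\<^sup>2 * y)
     + a * he_series q a (q\<^sup>2 * (q\<^sup>2 * y)) = 0"
proof -
  let ?q_square = "q\<^sup>2" and ?G = "he_series q a" and ?d = "he_coeff q a"
  \<comment> \<open>sum \<open>\<Sum> d\<^sub>k (1 - Q\<^sup>k) (1 - a Q\<^sup>k) y\<^sup>k\<close> twice: expanded, and shifted by the recurrence\<close>
  define e where "e k = ?d k * (1 - ?q_square ^ k) * (1 - a * ?q_square ^ k) * y ^ k" for k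
  have sums: "(\<lambda>k. ?d k * z ^ k) sums ?G z" for z
    unfolding he_series_def using summable_he_coeff by (rule summable_sums)
  have "e = (\<lambda>k. ?d k * y ^ k - (1 + a) * (?d k * (?q_square * y) ^ k) + a * (?d k * (?q_square * (?q_square * y)) ^ k))"
    unfolding e_def power_mult_distrib by (rule ext) (simp add: algebra_simps)
  then have "e sums (?G y - (1 + a) * ?G (?q_square * y) + a * ?G (?q_square * (?q_square * y)))"
    by (simp only:) (intro sums_add sums_diff sums_mult sums)
  moreover
  \<comment> \<open>the coefficient recurrence makes \<open>e\<close> a shifted copy of the series of \<open>-q_square y G(q_square y)\<close>\<close>
  have "e (Suc k) = - (?q_square * y) * (?d k * (?q_square * y) ^ k)" for k
  proof -
    have "e (Suc k) = ?d (Suc k) * ((1 - a * ?q_square ^ Suc k) * (1 - ?q_square ^ Suc k)) * y ^ Suc k"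
      unfolding e_def by (simp add: algebra_simps)
    then show ?thesis
      unfolding he_coeff_Suc by (simp add: power_mult_distrib algebra_simps)
  qed
  then have "(\<lambda>k. e (Suc k)) sums (- (?q_square * y) * ?G (?q_square * y))"
    by (simp only:) (intro sums_mult sums)
  then have "e sums (- (?q_square * y) * ?G (?q_square * y))"
    using sums_Suc_iff[of e] by (simp add: e_def)
  ultimately show ?thesis
    using sums_unique2 by (fastforce simp: algebra_simps)
qed

lemma continuous_on_he_series: "continuous_on A (he_series q a)"
proof -
  have "isCont (he_series q a) y" for y
    unfolding he_series_def[abs_def]
    by (rule isCont_powser_converges_everywhere) (rule summable_he_coeff)
  then show ?thesis
    by (simp add: continuous_at_imp_continuous_on)
qed

lemma he_series_0_pos: "0 < he_series q a 0"
proof -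
  have "he_series q a 0 = rqpoch_inf (a * q\<^sup>2) (q\<^sup>2)"
    unfolding he_series_def powser_zero by (simp add: he_coeff_def rqpoch_def)
  also have "\<dots> > 0"
    using rqpoch_inf_pos[OF a_q_square_power[of 0]] q_square by simp
  finally show ?thesis .
qed

end

lemma exp_HE_J_exponent:
  fixes q v :: real
  assumes "0 < q"
  shows "exp ((2 * of_real v + 2 * of_nat k + 2) * of_real (ln q))
           = complex_of_real (q powr (2 * v) * (q\<^sup>2) ^ Suc k)"
proof -
  have "exp ((2 * v + 2 * real k + 2) * ln q) = q powr (2 * v + real (2 * Suc k))"
    using assms by (simp add: powr_def algebra_simps)
  also have "\<dots> = q powr (2 * v) * q ^ (2 * Suc k)"
    using assms by (simp only: powr_add powr_realpow)
  also have "\<dots> = q powr (2 * v) * (q\<^sup>2) ^ Suc k"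
    by (simp only: power_mult)
  finally have "exp (complex_of_real ((2 * v + 2 * real k + 2) * ln q))
      = complex_of_real (q powr (2 * v) * (q\<^sup>2) ^ Suc k)"
    by (simp only: exp_of_real)
  then show ?thesis
    by simp
qed

lemma powr_mult_square_less_1:
  fixes q v :: real
  assumes "0 < q" "q < 1" "v > -1"
  shows "q powr (2 * v) * q\<^sup>2 < 1"
proof -
  have "q powr (2 * v) * q\<^sup>2 = q powr (2 * v + 2)"
    using assms by (simp add: powr_add)
  also have "\<dots> < 1 powr (2 * v + 2)"
    using assms by (intro powr_less_mono2) auto
  finally show ?thesis
    by simp
qed

lemma HE_J_eq_he_series:
  fixes q v t :: real
  assumes "0 < q" "q < 1" "v > -1"
  shows "HE_J q (of_real v) (of_real t)
           = exp (of_real v * Ln (of_real t)) / of_real (rqpoch_inf (q\<^sup>2) (q\<^sup>2))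
             * of_real (he_series q (q powr (2 * v)) (t\<^sup>2))"
proof -
  let ?a = "q powr (2 * v)"
  have Q: "0 < q\<^sup>2" "q\<^sup>2 < 1"
    using assms by (auto simp: power_less_one_iff)
  have a: "0 \<le> ?a" "?a * q\<^sup>2 < 1"
    using powr_mult_square_less_1[OF assms] by simp_all
  have "(-1) ^ k * of_real (q ^ (k * (k + 1)))
          * qpoch_inf (exp ((2 * of_real v + 2 * of_nat k + 2) * of_real (ln q))) (q\<^sup>2)
          / qpoch (of_real (q\<^sup>2)) (q\<^sup>2) k * of_real t ^ (2 * k)
        = complex_of_real (he_coeff q ?a k * (t\<^sup>2) ^ k)" for k
    unfolding exp_HE_J_exponent[OF assms(1)] qpoch_of_real qpoch_inf_of_real_shifted[OF assms(1,2) a]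
    by (simp add: he_coeff_def power_mult)
  moreover have "(\<Sum>k. complex_of_real (he_coeff q ?a k * (t\<^sup>2) ^ k)) = of_real (he_series q ?a (t\<^sup>2))"
    unfolding he_series_def by (rule suminf_of_real[OF summable_he_coeff[OF assms(1,2) a], symmetric])
  moreover have "qpoch_inf (of_real (q\<^sup>2)) (q\<^sup>2) = of_real (rqpoch_inf (q\<^sup>2) (q\<^sup>2))"
    using qpoch_inf_of_real[of "q\<^sup>2" "q\<^sup>2"] Q by simp
  ultimately show ?thesis
    unfolding HE_J_def by (simp only:)
qed

lemma HE_J_eq_0_iff:
  fixes q v t :: real
  assumes "0 < q" "q < 1" "v > -1"
  shows "HE_J q (of_real v) (of_real t) = 0 \<longleftrightarrow> he_series q (q powr (2 * v)) (t\<^sup>2) = 0"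
proof -
  have "rqpoch_inf (q\<^sup>2) (q\<^sup>2) \<noteq> 0"
    using rqpoch_inf_pos[of "q\<^sup>2" "q\<^sup>2"] assms by (simp add: power_less_one_iff)
  then show ?thesis
    unfolding HE_J_eq_he_series[OF assms] by simp
qed

lemma pos_before_first_zero:
  fixes G :: "real \<Rightarrow> real"
  assumes "continuous_on {0..y} G" "0 < G 0" "0 \<le> y"
    and "\<And>z. 0 < z \<Longrightarrow> z \<le> y \<Longrightarrow> G z \<noteq> 0"
  shows "0 < G y"
proof (rule ccontr)
  assume "\<not> 0 < G y"
  then obtain z where "0 \<le> z" "z \<le> y" "G z = 0"
    using IVT2'[of G y 0 0] assms(1-3) by fastforce
  with assms show False
    by (cases "z = 0") auto
qed

lemma first_zero_less_of_q_difference: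
  fixes G :: "real \<Rightarrow> real"
  assumes "0 < Q" "Q < 1" "0 < a"
    and "continuous_on {0..Y} G" "0 < G 0"
    and q_difference: "\<And>y. G y + (Q * y - 1 - a) * G (Q * y) + a * G (Q * (Q * y)) = 0"
    and "G Y = 0" "\<And>y. 0 < y \<Longrightarrow> y < Y \<Longrightarrow> G y \<noteq> 0"
  shows "Y < (1 + a) / Q"
proof (rule ccontr)
  define y\<^sub>0 where "y\<^sub>0 = (1 + a) / Q"
  assume "\<not> Y < (1 + a) / Q"
  then have "y\<^sub>0 \<le> Y"
    by (simp add: y\<^sub>0_def)
  have y\<^sub>0: "0 < y\<^sub>0" "Q * y\<^sub>0 = 1 + a"
    using assms(1,3) by (simp_all add: y\<^sub>0_def)
  have pos: "0 < G y" if "0 \<le> y" "y < Y" for y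
  proof (rule pos_before_first_zero[of y G])
    show "continuous_on {0..y} G"
      using that by (intro continuous_on_subset[OF assms(4)]) auto
    show "G z \<noteq> 0" if "0 < z" "z \<le> y" for z
      using assms(8) that \<open>y < Y\<close> by simp
  qed (use that assms(5) in auto)
  have "Q * Q < 1"
    using assms(1,2) mult_strict_mono[of Q 1 Q 1] by simp
  from mult_strict_right_mono[OF this y\<^sub>0(1)] have "Q * (Q * y\<^sub>0) < Y"
    using \<open>y\<^sub>0 \<le> Y\<close> by (simp add: mult.assoc)
  moreover have "0 \<le> Q * (Q * y\<^sub>0)"
    using assms(1) y\<^sub>0(1) by simp
  ultimately have "0 < a * G (Q * (Q * y\<^sub>0))"
    using \<open>0 < a\<close> pos by simp
  moreover have "G y\<^sub>0 = - a * G (Q * (Q * y\<^sub>0))"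
    using q_difference[of y\<^sub>0] by (simp add: y\<^sub>0(2))
  moreover have "0 \<le> G y\<^sub>0"
  proof (cases "y\<^sub>0 = Y")
    case False
    then show ?thesis
      using pos[of y\<^sub>0] y\<^sub>0(1) \<open>y\<^sub>0 \<le> Y\<close> by simp
  qed (simp add: \<open>G Y = 0\<close>)
  ultimately show False
    by simp
qed

theorem mainTheorem8:
  fixes q \<nu> j :: real
  assumes "0 < q" and "q < 1"
    and "\<nu> > -1"
    and "j > 0"
    and "HE_J q (of_real \<nu>) (of_real j) = 0"
    and "\<And>t. 0 < t \<Longrightarrow> t < j \<Longrightarrow> HE_J q (of_real \<nu>) (of_real t) \<noteq> 0"
  shows "j < sqrt (1 + q powr (2 * \<nu>)) / q"
proof -
  define a where "a = q powr (2 * \<nu>)"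
  have Q: "0 < q\<^sup>2" "q\<^sup>2 < 1"
    using assms(1,2) by (auto simp: power_less_one_iff)
  have a: "0 < a" "a * q\<^sup>2 < 1"
    using powr_mult_square_less_1[OF assms(1-3)] assms(1) by (simp_all add: a_def)
  have no_zero: "he_series q a y \<noteq> 0" if "0 < y" "y < j\<^sup>2" for y
  proof -
    have "0 < sqrt y" "sqrt y < j"
      using that assms(4) real_sqrt_less_mono[of y "j\<^sup>2"] by auto
    then show ?thesis
      using assms(6)[of "sqrt y"] HE_J_eq_0_iff[OF assms(1-3), folded a_def] that by simp
  qed
  note params = assms(1,2) less_imp_le[OF a(1)] a(2)
  have "he_series q a (j\<^sup>2) = 0"
    using assms(5) HE_J_eq_0_iff[OF assms(1-3), folded a_def] by simp
  then have "j\<^sup>2 < (1 + a) / q\<^sup>2"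
    by (intro first_zero_less_of_q_difference[OF Q a(1) continuous_on_he_series[OF params]
          he_series_0_pos[OF params] he_series_q_difference[OF params]] no_zero)
  then have "sqrt (j\<^sup>2) < sqrt ((1 + a) / q\<^sup>2)"
    by (rule real_sqrt_less_mono)
  then show ?thesis
    using assms(1,4) by (simp add: a_def real_sqrt_divide)
qed

end
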